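(* Let $1\le r<\infty$, $d\in\mathbb{N}$, $\varepsilon>0$. Let $a=\lceil(8/\varepsilon+3)^r\rceil$ and $M=\{a^{j-1}: j\in\mathbb{N}\}$. Let $\bar m,\bar n\in[M]^d$ with $m_1<n_1<\dots<m_d<n_d$ and let $k>n_d$. Let $F\colon S_{\ell_\infty^k}\to S_{\ell_r^k}$ be a support preserving and step preserving map. Then \[\|F(z(\bar m))-F(z(\bar n))\|_r>1-\varepsilon.\]
   Context: $S_{\ell_p^k}$ is the unit sphere of $(\mathbb{R}^k,\|\cdot\|_p)$. $[M]^d$ is the set of increasing $d$-tuples from $M$. For $\bar m\in[\mathbb{N}]^d$ with $m_0=0$, $z(\bar m)=\sum_{s=1}^d(1-\frac{s-1}{d})1_{(m_{s-1},m_s]}$, viewed in $S_{\ell_\infty^k}$ for $k\ge m_d$, where $1_{(a,b]}$ is the indicator vector of $\{i:a<i\le b\}$. $\mathrm{supp}(x)=\{i:x_i\ne0\}$; $F$ is support preserving if $\mathrm{supp}(F(x))=\mathrm{supp}(x)$ for all $x$; $F=(F_i)$ is step preserving if $x_i=x_j$ implies $F_i(x)=F_j(x)$. *)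

theory Defs
  imports Complex_Main
begin

text \<open>Vectors of \<open>R^k\<close> are represented as functions \<open>nat \<Rightarrow> real\<close> with coordinates
  indexed by \<open>{1..k}\<close> and vanishing outside \<open>{1..k}\<close>.\<close>

definition vec_on :: "nat \<Rightarrow> (nat \<Rightarrow> real) \<Rightarrow> bool" where
  "vec_on k x \<longleftrightarrow> (\<forall>i. i \<notin> {1..k} \<longrightarrow> x i = 0)"

definition sup_norm :: "nat \<Rightarrow> (nat \<Rightarrow> real) \<Rightarrow> real" where
  "sup_norm k x = Max ((\<lambda>i. \<bar>x i\<bar>) ` {1..k} \<union> {0})"

definition lp_norm :: "real \<Rightarrow> nat \<Rightarrow> (nat \<Rightarrow> real) \<Rightarrow> real" where
  "lp_norm p k x = (\<Sum>i=1..k. \<bar>x i\<bar> powr p) powr (1 / p)"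

definition S_inf :: "nat \<Rightarrow> (nat \<Rightarrow> real) set" where
  "S_inf k = {x. vec_on k x \<and> sup_norm k x = 1}"

definition S_lp :: "real \<Rightarrow> nat \<Rightarrow> (nat \<Rightarrow> real) set" where
  "S_lp p k = {x. vec_on k x \<and> lp_norm p k x = 1}"

definition supp :: "nat \<Rightarrow> (nat \<Rightarrow> real) \<Rightarrow> nat set" where
  "supp k x = {i \<in> {1..k}. x i \<noteq> 0}"

definition support_preserving :: "nat \<Rightarrow> ((nat \<Rightarrow> real) \<Rightarrow> (nat \<Rightarrow> real)) \<Rightarrow> bool" where
  "support_preserving k F \<longleftrightarrow> (\<forall>x \<in> S_inf k. supp k (F x) = supp k x)"

definition step_preserving :: "nat \<Rightarrow> ((nat \<Rightarrow> real) \<Rightarrow> (nat \<Rightarrow> real)) \<Rightarrow> bool" where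
  "step_preserving k F \<longleftrightarrow>
     (\<forall>x \<in> S_inf k. \<forall>i \<in> {1..k}. \<forall>j \<in> {1..k}. x i = x j \<longrightarrow> F x i = F x j)"

definition ind :: "nat \<Rightarrow> nat \<Rightarrow> nat \<Rightarrow> real" where
  "ind a b i = (if a < i \<and> i \<le> b then 1 else 0)"

text \<open>A \<open>d\<close>-tuple \<open>m_1,\<dots>,m_d\<close> is a function \<open>m\<close> on \<open>{1..d}\<close>; \<open>m_0 = 0\<close>.\<close>
definition z :: "nat \<Rightarrow> (nat \<Rightarrow> nat) \<Rightarrow> (nat \<Rightarrow> real)" where
  "z d m = (\<lambda>i. \<Sum>s=1..d. (1 - real (s - 1) / real d) *
              ind (if s - 1 = 0 then 0 else m (s - 1)) (m s) i)"

end

theory Submission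
  imports Defs "HOL-Analysis.Analysis"
begin

(* Put u = F(z(m)) and v = F(z(n)). Step and support preservation make u constant on each
   (m_(s-1), m_s] and zero beyond m_d, and v constant on each (n_(s-1), n_s] and zero beyond n_d.
   Each term of 0 = n_0 < m_1 < n_1 < ... < m_d < n_d is at least a times the previous one, so
   (m_s, n_s] is at least a - 1 times as long as (n_(s-1), m_s], and (n_s, m_(s+1)] at least a - 1
   times as long as (m_s, n_s]. Hence v carries at most 1/(a-1) of its l_r-mass on the gaps
   (n_(s-1), m_s], while u carries at least 1 - 1/(a-1) of its mass there. On these gaps the
   convexity estimate |u|^r <= (1-t)^(1-r) |u-v|^r + t^(1-r) |v|^r with t = eps/2 yields
   ||u - v||_r^r > (1 - eps)^r. *)

lemma abs_powr_le_weighted: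
  fixes x y r t :: real
  assumes r: "1 \<le> r" and t: "0 < t" "t < 1"
  shows "\<bar>x\<bar> powr r \<le> (1 - t) powr (1 - r) * \<bar>x - y\<bar> powr r + t powr (1 - r) * \<bar>y\<bar> powr r"
proof -
  define w v where "w = \<bar>x - y\<bar>" and "v = \<bar>y\<bar>"
  have "\<bar>x\<bar> powr r \<le> (w + v) powr r"
    using r by (intro powr_mono2) (auto simp: w_def v_def)
  also have "\<dots> \<le> (1 - t) powr (1 - r) * w powr r + t powr (1 - r) * v powr r"
  proof (cases "w = 0 \<or> v = 0")
    case True
    have "(1 - t) powr 0 \<le> (1 - t) powr (1 - r)" "t powr 0 \<le> t powr (1 - r)"
      using r t by (intro powr_mono'; simp)+
    then have "1 \<le> (1 - t) powr (1 - r)" "1 \<le> t powr (1 - r)"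
      using t by simp_all
    then show ?thesis
      using True r by (auto simp: w_def v_def mult_le_cancel_right1)
  next
    case False
    then have "0 < w" "0 < v" by (auto simp: w_def v_def)
    have convex_combination: "w + v = (1 - t) *\<^sub>R (w / (1 - t)) + t *\<^sub>R (v / t)"
      using t by simp
    have "(w + v) powr r \<le> (1 - t) * (w / (1 - t)) powr r + t * (v / t) powr r"
      unfolding convex_combination using t \<open>0 < w\<close> \<open>0 < v\<close>
      by (intro convex_onD[OF powr_convex[OF r]]) auto
    also have "\<dots> = (1 - t) powr (1 - r) * w powr r + t powr (1 - r) * v powr r"
      using t \<open>0 < w\<close> \<open>0 < v\<close> by (simp add: powr_divide powr_diff field_simps)
    finally show ?thesis .
  qed
  finally show ?thesis by (simp add: w_def v_def)
qed

lemma sum_greaterThanAtMost_split: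
  fixes l m u :: nat
  assumes "l \<le> m" "m \<le> u"
  shows "sum g {l<..u} = sum g {l<..m} + sum g {m<..u}"
proof -
  have "{l<..u} = {l<..m} \<union> {m<..u}" using assms by auto
  then show ?thesis by (simp add: sum.union_disjoint)
qed

lemma sum_block_ratio:
  fixes g :: "nat \<Rightarrow> real" and A :: real
  assumes "g constant_on {p<..q}" and "\<And>i. 0 \<le> g i"
    and "1 \<le> A" and "p \<le> p'" and "A * p' \<le> q"
  shows "(A - 1) * sum g {p<..p'} \<le> sum g {p'<..q}"
proof (cases "p < p'")
  case False
  then show ?thesis using assms(2) by (simp add: sum_nonneg)
next
  case True
  obtain c where c: "\<And>i. i \<in> {p<..q} \<Longrightarrow> g i = c"
    using assms(1) by (auto simp: constant_on_def)
  have "real p' \<le> A * p'" using assms(3) by (simp add: mult_le_cancel_right1)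
  then have "p' \<le> q" using assms(5) by linarith
  then have "0 \<le> c" using True c[of p'] assms(2)[of p'] by simp
  have "sum g {p<..p'} = (real p' - real p) * c" "sum g {p'<..q} = (real q - real p') * c"
    using assms(4) \<open>p' \<le> q\<close> c by simp_all
  moreover have "(A - 1) * (real p' - real p) \<le> real q - real p'"
  proof -
    have "0 \<le> (A - 1) * p" using assms(3) by simp
    then show ?thesis using assms(5) by (simp add: algebra_simps)
  qed
  ultimately show ?thesis
    using \<open>0 \<le> c\<close> by (simp add: mult.assoc[symmetric] mult_right_mono)
qed

definition seq0 :: "(nat \<Rightarrow> nat) \<Rightarrow> nat \<Rightarrow> nat" where
  "seq0 m s = (if s = 0 then 0 else m s)"

lemma seq0_0 [simp]: "seq0 m 0 = 0"
  and seq0_Suc [simp]: "seq0 m (Suc s) = m (Suc s)"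
  by (simp_all add: seq0_def)

text \<open>For \<open>0 = n\<^sub>0 \<le> m\<^sub>1 \<le> n\<^sub>1 \<le> \<dots> \<le> m\<^sub>d \<le> n\<^sub>d\<close>, \<open>sum_nm\<close> and \<open>sum_mn\<close> are the
  parts of a sum over \<open>(0, n\<^sub>d]\<close> carried by the intervals \<open>(n\<^sub>s\<^sub>-\<^sub>1, m\<^sub>s]\<close> and
  \<open>(m\<^sub>s, n\<^sub>s]\<close>, \<open>s = 1, \<dots>, d\<close>.\<close>

definition sum_nm :: "(nat \<Rightarrow> nat) \<Rightarrow> (nat \<Rightarrow> nat) \<Rightarrow> nat \<Rightarrow> (nat \<Rightarrow> real) \<Rightarrow> real" where
  "sum_nm m n d g = (\<Sum>s<d. sum g {seq0 n s<..m (Suc s)})"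

definition sum_mn :: "(nat \<Rightarrow> nat) \<Rightarrow> (nat \<Rightarrow> nat) \<Rightarrow> nat \<Rightarrow> (nat \<Rightarrow> real) \<Rightarrow> real" where
  "sum_mn m n d g = (\<Sum>s<d. sum g {m (Suc s)<..n (Suc s)})"

lemma constant_on_abs_powr:
  fixes u :: "'a \<Rightarrow> real"
  shows "u constant_on S \<Longrightarrow> (\<lambda>i. \<bar>u i\<bar> powr r) constant_on S"
  by (auto simp: constant_on_def)

lemma sum_nm_mono: "(\<And>i. f i \<le> g i) \<Longrightarrow> sum_nm m n d f \<le> sum_nm m n d g"
  unfolding sum_nm_def by (intro sum_mono) auto

lemma sum_nm_linear:
  "sum_nm m n d (\<lambda>i. a * f i + b * g i) = a * sum_nm m n d f + b * sum_nm m n d g"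
  by (simp add: sum_nm_def sum.distrib sum_distrib_left)

locale separated_sequences =
  fixes A :: real and m n :: "nat \<Rightarrow> nat" and d :: nat
  assumes A_gt_1: "1 < A"
    and sep_nm: "\<And>s. s < d \<Longrightarrow> A * seq0 n s \<le> m (Suc s)"
    and sep_mn: "\<And>s. s < d \<Longrightarrow> A * m (Suc s) \<le> n (Suc s)"
begin

lemma le_of_A_mult_le:
  fixes x y :: nat
  assumes "A * x \<le> y"
  shows "x \<le> y"
proof -
  have "real x \<le> A * x" using A_gt_1 by (simp add: mult_le_cancel_right1)
  then show ?thesis using assms by linarith
qed

lemma interleaved:
  assumes "s < d"
  shows "seq0 n s \<le> m (Suc s)" and "m (Suc s) \<le> n (Suc s)"
  using le_of_A_mult_le sep_nm sep_mn assms by blast+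

lemma seq0_m_le_seq0_n: "seq0 m d \<le> seq0 n d"
  using interleaved(2)[of "d - 1"] by (cases d) auto

lemma sum_eq_sum_nm_plus_sum_mn:
  assumes "seq0 n d \<le> k" and "\<And>i. i \<in> {seq0 n d<..k} \<Longrightarrow> g i = 0"
  shows "sum g {1..k} = sum_nm m n d g + sum_mn m n d g"
proof -
  have "sum g {0<..seq0 n d'} = sum_nm m n d' g + sum_mn m n d' g" if "d' \<le> d" for d'
    using that
  proof (induction d')
    case 0
    then show ?case by (simp add: sum_nm_def sum_mn_def)
  next
    case (Suc d')
    have "seq0 n d' \<le> m (Suc d')" "m (Suc d') \<le> n (Suc d')"
      using interleaved Suc.prems by simp_all
    then have "sum g {0<..seq0 n (Suc d')}
        = sum g {0<..seq0 n d'} + sum g {seq0 n d'<..m (Suc d')} + sum g {m (Suc d')<..n (Suc d')}"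
      using sum_greaterThanAtMost_split[of 0 "m (Suc d')" "n (Suc d')" g]
        sum_greaterThanAtMost_split[of 0 "seq0 n d'" "m (Suc d')" g] by simp
    then show ?case
      using Suc by (simp add: sum_nm_def sum_mn_def)
  qed
  moreover have "sum g {1..k} = sum g {0<..seq0 n d} + sum g {seq0 n d<..k}"
    using assms(1) sum_greaterThanAtMost_split[of 0 "seq0 n d" k g]
    by (simp add: atLeastSucAtMost_greaterThanAtMost[of 0, simplified])
  ultimately show ?thesis using assms(2) by simp
qed

lemma sum_nm_le_sum_mn:
  assumes "\<And>s. s < d \<Longrightarrow> g constant_on {seq0 n s<..n (Suc s)}" and "\<And>i. 0 \<le> g i"
  shows "(A - 1) * sum_nm m n d g \<le> sum_mn m n d g"
proof -
  have "(A - 1) * sum g {seq0 n s<..m (Suc s)} \<le> sum g {m (Suc s)<..n (Suc s)}" if "s < d" for s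
    using assms A_gt_1 interleaved(1) sep_mn that by (intro sum_block_ratio) auto
  then show ?thesis
    unfolding sum_nm_def sum_mn_def sum_distrib_left[where A = "{..<d}"] by (rule sum_mono) simp
qed

lemma sum_mn_le_sum_nm:
  assumes "\<And>s. s < d \<Longrightarrow> g constant_on {seq0 m s<..m (Suc s)}" and "\<And>i. 0 \<le> g i"
    and "\<And>i. seq0 m d < i \<Longrightarrow> g i = 0"
  shows "(A - 1) * sum_mn m n d g \<le> sum_nm m n d g"
proof (cases d)
  case 0
  then show ?thesis by (simp add: sum_nm_def sum_mn_def)
next
  case (Suc d')
  \<comment> \<open>\<open>(m\<^sub>s, n\<^sub>s]\<close> and the following gap \<open>(n\<^sub>s, m\<^sub>s\<^sub>+\<^sub>1]\<close> lie in one step of \<open>g\<close>;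
    the last interval \<open>(m\<^sub>d, n\<^sub>d]\<close> has no following gap, but \<open>g\<close> vanishes there.\<close>
  have last_block: "sum g {m d<..n d} = 0"
    using assms(3) Suc by simp
  have block: "(A - 1) * sum g {m (Suc s)<..n (Suc s)} \<le> sum g {n (Suc s)<..m (Suc (Suc s))}"
    if "s < d'" for s
  proof (rule sum_block_ratio)
    show "g constant_on {m (Suc s)<..m (Suc (Suc s))}"
      using assms(1)[of "Suc s"] that Suc by simp
    show "A * n (Suc s) \<le> m (Suc (Suc s))"
      using sep_nm[of "Suc s"] that Suc by simp
  qed (use assms(2) A_gt_1 interleaved(2)[of s] that Suc in auto)
  have "sum_nm m n d g = sum g {0<..m (Suc 0)} + (\<Sum>s<d'. sum g {n (Suc s)<..m (Suc (Suc s))})"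
    unfolding sum_nm_def Suc sum.lessThan_Suc_shift by simp
  moreover have "sum_mn m n d g = (\<Sum>s<d'. sum g {m (Suc s)<..n (Suc s)}) + sum g {m d<..n d}"
    unfolding sum_mn_def Suc by simp
  moreover have "(A - 1) * (\<Sum>s<d'. sum g {m (Suc s)<..n (Suc s)})
      \<le> (\<Sum>s<d'. sum g {n (Suc s)<..m (Suc (Suc s))})"
    unfolding sum_distrib_left[where A = "{..<d'}"] using block by (auto intro!: sum_mono)
  moreover have "0 \<le> sum g {0<..m (Suc 0)}"
    using assms(2) by (simp add: sum_nonneg)
  ultimately show ?thesis
    using last_block by (simp add: algebra_simps)
qed

lemma sum_nm_nonneg: "(\<And>i. 0 \<le> g i) \<Longrightarrow> 0 \<le> sum_nm m n d g"
  and sum_mn_nonneg: "(\<And>i. 0 \<le> g i) \<Longrightarrow> 0 \<le> sum_mn m n d g"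
  by (simp_all add: sum_nm_def sum_mn_def sum_nonneg)

lemma sum_nm_ge_of_m_steps:
  assumes "seq0 n d \<le> k" and "\<And>s. s < d \<Longrightarrow> g constant_on {seq0 m s<..m (Suc s)}"
    and "\<And>i. 0 \<le> g i" and "\<And>i. seq0 m d < i \<Longrightarrow> g i = 0" and "sum g {1..k} = 1"
  shows "1 - 1 / (A - 1) \<le> sum_nm m n d g"
proof -
  have "sum_nm m n d g + sum_mn m n d g = 1"
    using assms seq0_m_le_seq0_n sum_eq_sum_nm_plus_sum_mn[of k g] by simp
  moreover have "(A - 1) * sum_mn m n d g \<le> sum_nm m n d g"
    using assms by (intro sum_mn_le_sum_nm)
  moreover have "0 \<le> sum_mn m n d g"
    using assms(3) by (rule sum_mn_nonneg)
  ultimately have "sum_mn m n d g \<le> 1 / (A - 1)"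
    using A_gt_1 by (simp add: pos_le_divide_eq mult.commute)
  with \<open>sum_nm m n d g + sum_mn m n d g = 1\<close> show ?thesis by linarith
qed

lemma sum_nm_le_of_n_steps:
  assumes "seq0 n d \<le> k" and "\<And>s. s < d \<Longrightarrow> g constant_on {seq0 n s<..n (Suc s)}"
    and "\<And>i. 0 \<le> g i" and "\<And>i. seq0 n d < i \<Longrightarrow> g i = 0" and "sum g {1..k} = 1"
  shows "sum_nm m n d g \<le> 1 / (A - 1)"
proof -
  have "sum_nm m n d g + sum_mn m n d g = 1"
    using assms sum_eq_sum_nm_plus_sum_mn[of k g] by simp
  moreover have "(A - 1) * sum_nm m n d g \<le> sum_mn m n d g"
    using assms by (intro sum_nm_le_sum_mn)
  moreover have "0 \<le> sum_nm m n d g"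
    using assms(3) by (rule sum_nm_nonneg)
  ultimately show ?thesis
    using A_gt_1 by (simp add: pos_le_divide_eq mult.commute)
qed

lemma sum_powr_diff_lower_bound:
  fixes u v :: "nat \<Rightarrow> real" and r t :: real
  assumes r: "1 \<le> r" and t: "0 < t" "t < 1" and k: "seq0 n d \<le> k"
    and u_steps: "\<And>s. s < d \<Longrightarrow> u constant_on {seq0 m s<..m (Suc s)}"
    and u_tail: "\<And>i. seq0 m d < i \<Longrightarrow> u i = 0"
    and v_steps: "\<And>s. s < d \<Longrightarrow> v constant_on {seq0 n s<..n (Suc s)}"
    and v_tail: "\<And>i. seq0 n d < i \<Longrightarrow> v i = 0"
    and u_norm: "(\<Sum>i=1..k. \<bar>u i\<bar> powr r) = 1" and v_norm: "(\<Sum>i=1..k. \<bar>v i\<bar> powr r) = 1"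
  shows "(1 - t) powr (r - 1) * (1 - (1 + t powr (1 - r)) / (A - 1))
    \<le> (\<Sum>i=1..k. \<bar>u i - v i\<bar> powr r)"
proof -
  define U V W where "U = (\<lambda>i. \<bar>u i\<bar> powr r)" and "V = (\<lambda>i. \<bar>v i\<bar> powr r)"
    and "W = (\<lambda>i. \<bar>u i - v i\<bar> powr r)"
  define Q P where "Q = (1 - t) powr (1 - r)" and "P = t powr (1 - r)"
  have nonneg: "0 \<le> U i" "0 \<le> V i" "0 \<le> W i" for i
    by (simp_all add: U_def V_def W_def)
  have tail: "U i = 0" "V i = 0" "W i = 0" if "seq0 n d < i" for i
    using that seq0_m_le_seq0_n u_tail v_tail by (simp_all add: U_def V_def W_def)
  have mass_u: "1 - 1 / (A - 1) \<le> sum_nm m n d U"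
    using nonneg u_tail u_norm u_steps[THEN constant_on_abs_powr]
    by (intro sum_nm_ge_of_m_steps[OF k]) (simp_all add: U_def)
  have mass_v: "sum_nm m n d V \<le> 1 / (A - 1)"
    using nonneg tail v_norm v_steps[THEN constant_on_abs_powr]
    by (intro sum_nm_le_of_n_steps[OF k]) (simp_all add: V_def)
  have convexity: "sum_nm m n d U \<le> Q * sum_nm m n d W + P * sum_nm m n d V"
    unfolding sum_nm_linear[symmetric] U_def V_def W_def Q_def P_def
    using abs_powr_le_weighted[OF r t] by (rule sum_nm_mono)
  have "sum_nm m n d W \<le> sum W {1..k}"
    using sum_eq_sum_nm_plus_sum_mn[OF k] tail sum_mn_nonneg nonneg by simp
  then have "Q * sum_nm m n d W \<le> Q * sum W {1..k}"
    by (simp add: Q_def mult_left_mono)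
  moreover have "P * sum_nm m n d V \<le> P * (1 / (A - 1))"
    using mass_v by (rule mult_left_mono) (simp add: P_def)
  ultimately have "1 - 1 / (A - 1) \<le> Q * sum W {1..k} + P * (1 / (A - 1))"
    using mass_u convexity by linarith
  then have "1 - (1 + P) / (A - 1) \<le> Q * sum W {1..k}"
    by (simp add: add_divide_distrib)
  then have "(1 - t) powr (r - 1) * (1 - (1 + P) / (A - 1))
      \<le> (1 - t) powr (r - 1) * (Q * sum W {1..k})"
    by (rule mult_left_mono) simp
  also have "\<dots> = sum W {1..k}"
    using t by (simp add: Q_def mult.assoc[symmetric] powr_add[symmetric])
  finally show ?thesis by (simp add: P_def W_def)
qed

end

lemma lift_Suc_mono_le_bounded:
  fixes c :: "nat \<Rightarrow> 'a::preorder"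
  assumes "\<And>s. s < d \<Longrightarrow> c s \<le> c (Suc s)" and "p \<le> q" and "q \<le> d"
  shows "c p \<le> c q"
  using assms(2,3)
proof (induction q rule: dec_induct)
  case (step q)
  then show ?case using assms(1)[of q] by (auto intro: order.trans)
qed simp

lemma exists_block:
  fixes c :: "nat \<Rightarrow> nat"
  assumes "c 0 < i" and "i \<le> c d"
  shows "\<exists>s<d. c s < i \<and> i \<le> c (Suc s)"
  using assms(2)
proof (induction d)
  case 0
  then show ?case using assms(1) by simp
next
  case (Suc d)
  then show ?case
    by (cases "i \<le> c d") (auto intro: less_SucI simp: not_le)
qed

lemma sum_ind_on_block:
  fixes c :: "nat \<Rightarrow> nat" and w :: "nat \<Rightarrow> real"
  assumes mono: "\<And>s. s < d \<Longrightarrow> c s \<le> c (Suc s)"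
    and "s < d" and "c s < i" and "i \<le> c (Suc s)"
  shows "(\<Sum>s'<d. w s' * ind (c s') (c (Suc s')) i) = w s"
proof -
  have ind_eq: "ind (c s') (c (Suc s')) i = (if s' = s then 1 else 0)" if "s' < d" for s'
  proof (cases s' s rule: linorder_cases)
    case less
    then have "c (Suc s') \<le> c s"
      using lift_Suc_mono_le_bounded[of d c, OF mono] assms(2) by simp
    then show ?thesis using less assms(3) by (simp add: ind_def)
  next
    case greater
    then have "c (Suc s) \<le> c s'"
      using lift_Suc_mono_le_bounded[of d c, OF mono] that by simp
    then show ?thesis using greater assms(4) by (simp add: ind_def)
  qed (use assms(3,4) in \<open>simp add: ind_def\<close>)
  then have "(\<Sum>s'<d. w s' * ind (c s') (c (Suc s')) i) = (\<Sum>s'<d. if s' = s then w s' else 0)"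
    by (intro sum.cong) simp_all
  then show ?thesis
    using assms(2) by simp
qed

lemma sum_ind_outside:
  fixes c :: "nat \<Rightarrow> nat" and w :: "nat \<Rightarrow> real"
  assumes mono: "\<And>s. s < d \<Longrightarrow> c s \<le> c (Suc s)" and "i \<le> c 0 \<or> c d < i"
  shows "(\<Sum>s<d. w s * ind (c s) (c (Suc s)) i) = 0"
proof (rule sum.neutral, intro ballI)
  fix s assume "s \<in> {..<d}"
  then have "c 0 \<le> c s" "c (Suc s) \<le> c d"
    using lift_Suc_mono_le_bounded[of d c, OF mono] by simp_all
  then show "w s * ind (c s) (c (Suc s)) i = 0"
    using assms(2) by (auto simp: ind_def)
qed

lemma z_eq_sum_lessThan:
  "z d m i = (\<Sum>s<d. (1 - real s / real d) * ind (seq0 m s) (seq0 m (Suc s)) i)"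
  by (simp add: z_def sum.atLeast1_atMost_eq seq0_def cong: if_cong)

lemma z_on_block:
  assumes "\<And>s. s < d \<Longrightarrow> seq0 m s \<le> m (Suc s)"
    and "s < d" and "seq0 m s < i" and "i \<le> m (Suc s)"
  shows "z d m i = 1 - real s / real d"
  unfolding z_eq_sum_lessThan using assms by (intro sum_ind_on_block) simp_all

lemma z_outside:
  assumes "\<And>s. s < d \<Longrightarrow> seq0 m s \<le> m (Suc s)" and "i = 0 \<or> seq0 m d < i"
  shows "z d m i = 0"
  unfolding z_eq_sum_lessThan using assms by (intro sum_ind_outside) auto

lemma abs_z_le_1:
  assumes mono: "\<And>s. s < d \<Longrightarrow> seq0 m s \<le> m (Suc s)"
  shows "\<bar>z d m i\<bar> \<le> 1"
proof (cases "0 < i \<and> i \<le> seq0 m d")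
  case True
  then obtain s where "s < d" "seq0 m s < i" "i \<le> m (Suc s)"
    using exists_block[of "seq0 m" i d] by auto
  then have "z d m i = 1 - real s / real d"
    using mono by (intro z_on_block)
  moreover have "real s / real d \<le> 1"
    using \<open>s < d\<close> by simp
  ultimately show ?thesis by simp
next
  case False
  then have "z d m i = 0"
    using mono by (intro z_outside) auto
  then show ?thesis by simp
qed

lemma z_constant_on_block:
  assumes "\<And>s. s < d \<Longrightarrow> seq0 m s \<le> m (Suc s)" and "s < d"
  shows "z d m constant_on {seq0 m s<..m (Suc s)}"
  unfolding constant_on_def using z_on_block[OF assms] by auto

lemma z_in_S_inf:
  assumes "0 < d" and steps: "\<And>s. s < d \<Longrightarrow> seq0 m s < m (Suc s)" and "seq0 m d < k"
  shows "z d m \<in> S_inf k"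
proof -
  have mono: "\<And>s. s < d \<Longrightarrow> seq0 m s \<le> m (Suc s)"
    using steps by (simp add: less_imp_le)
  have "vec_on k (z d m)"
    unfolding vec_on_def using z_outside[of d m, OF mono] assms(3) by auto
  moreover have "z d m 1 = 1 - real 0 / real d"
    using mono steps[of 0] assms(1) by (intro z_on_block) auto
  then have "sup_norm k (z d m) = 1"
    unfolding sup_norm_def using abs_z_le_1[OF mono] assms(3)
    by (intro Max_eqI) (auto intro!: image_eqI[of 1])
  ultimately show ?thesis by (simp add: S_inf_def)
qed

lemma support_preserving_vanishing:
  assumes "\<forall>x\<in>S_inf k. F x \<in> S_lp r k" and "support_preserving k F"
    and "x \<in> S_inf k" and "x i = 0"
  shows "F x i = 0"
proof (cases "i \<in> {1..k}")
  case True
  then show ?thesis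
    using assms(2-4) by (auto simp: support_preserving_def supp_def)
next
  case False
  then show ?thesis
    using assms(1,3) by (auto simp: S_lp_def vec_on_def)
qed

lemma step_preserving_constant_on:
  assumes "step_preserving k F" and "x \<in> S_inf k" and "I \<subseteq> {1..k}" and "x constant_on I"
  shows "F x constant_on I"
proof (cases "I = {}")
  case False
  then obtain j where "j \<in> I" by blast
  then have "F x i = F x j" if "i \<in> I" for i
    using assms that unfolding step_preserving_def constant_on_def by (metis subsetD)
  then show ?thesis unfolding constant_on_def by blast
qed (simp add: constant_on_def)

lemma sum_powr_eq_1_if_S_lp:
  assumes "0 < p" and "x \<in> S_lp p k"
  shows "(\<Sum>i=1..k. \<bar>x i\<bar> powr p) = 1"
proof -
  define S where "S = (\<Sum>i=1..k. \<bar>x i\<bar> powr p)"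
  have "S powr (1 / p) = 1"
    using assms(2) by (simp add: S_lp_def lp_norm_def S_def)
  then have "(S powr (1 / p)) powr p = 1" by simp
  moreover have "0 \<le> S" by (simp add: S_def sum_nonneg)
  ultimately show ?thesis
    using assms(1) by (simp add: powr_powr S_def)
qed

lemma lp_norm_gt:
  assumes "0 < p" and "0 \<le> x" and "x powr p < (\<Sum>i=1..k. \<bar>w i\<bar> powr p)"
  shows "x < lp_norm p k w"
proof -
  have "(x powr p) powr (1 / p) < (\<Sum>i=1..k. \<bar>w i\<bar> powr p) powr (1 / p)"
    using assms by (intro powr_less_mono2) auto
  then show ?thesis
    using assms(1,2) by (simp add: lp_norm_def powr_powr)
qed

lemma F_z_step_vector:
  assumes "0 < r" and "0 < d" and steps: "\<And>s. s < d \<Longrightarrow> seq0 m s < m (Suc s)"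
    and "seq0 m d < k" and F: "\<forall>x\<in>S_inf k. F x \<in> S_lp r k"
    and "support_preserving k F" and "step_preserving k F"
  shows "\<And>s. s < d \<Longrightarrow> F (z d m) constant_on {seq0 m s<..m (Suc s)}"
    and "\<And>i. seq0 m d < i \<Longrightarrow> F (z d m) i = 0"
    and "(\<Sum>i=1..k. \<bar>F (z d m) i\<bar> powr r) = 1"
proof -
  have mono: "\<And>s. s < d \<Longrightarrow> seq0 m s \<le> m (Suc s)"
    using steps by (simp add: less_imp_le)
  have z: "z d m \<in> S_inf k"
    using assms(2-4) by (rule z_in_S_inf)
  show "F (z d m) constant_on {seq0 m s<..m (Suc s)}" if "s < d" for s
  proof (rule step_preserving_constant_on[OF assms(7) z])
    have "seq0 m (Suc s) \<le> seq0 m d"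
      by (rule lift_Suc_mono_le_bounded[of d]) (use mono that in auto)
    then show "{seq0 m s<..m (Suc s)} \<subseteq> {1..k}"
      using assms(4) by auto
  qed (rule z_constant_on_block[OF mono that])
  show "F (z d m) i = 0" if "seq0 m d < i" for i
    using support_preserving_vanishing[OF F assms(6) z] z_outside[of d m, OF mono] that by simp
  show "(\<Sum>i=1..k. \<bar>F (z d m) i\<bar> powr r) = 1"
    using assms(1) F z by (intro sum_powr_eq_1_if_S_lp) auto
qed

lemma large_A_bound:
  fixes r \<epsilon> A :: real
  assumes r: "1 \<le> r" and \<epsilon>: "0 < \<epsilon>" "\<epsilon> \<le> 1" and A: "(8 / \<epsilon> + 3) powr r \<le> A"
  shows "1 < A" and "(1 + (\<epsilon> / 2) powr (1 - r)) / (A - 1) < \<epsilon>"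
proof -
  define c where "c = 2 / \<epsilon>"
  have c: "2 \<le> c" using \<epsilon> by (simp add: c_def field_simps)
  have "(\<epsilon> / 2) powr (1 - r) = c powr (r - 1)"
    using \<epsilon> by (simp add: c_def powr_divide powr_diff field_simps)
  have "(4 * c) powr r \<le> (8 / \<epsilon> + 3) powr r"
    using c r \<epsilon> by (intro powr_mono2) (auto simp: c_def)
  moreover have "4 * c powr r \<le> (4 * c) powr r"
  proof -
    have "4 powr 1 \<le> 4 powr r" using r by (intro powr_mono) auto
    then show ?thesis using c by (simp add: powr_mult mult_right_mono)
  qed
  ultimately have A4: "4 * c powr r \<le> A" using A by linarith
  have "c \<le> c powr r" using powr_mono[of 1 r c] r c by simp
  then show A1: "1 < A" using A4 c by linarith
  have "c * (1 + c powr (r - 1)) = c + c powr r"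
    using c by (simp add: distrib_left powr_add[of c 1 "r - 1", simplified])
  also have "\<dots> < 2 * (A - 1)"
    using A4 \<open>c \<le> c powr r\<close> c by argo
  finally have "1 + c powr (r - 1) < \<epsilon> * (A - 1)"
    using \<epsilon> by (simp add: c_def field_simps)
  then show "(1 + (\<epsilon> / 2) powr (1 - r)) / (A - 1) < \<epsilon>"
    using A1 \<open>(\<epsilon> / 2) powr (1 - r) = c powr (r - 1)\<close> by (simp add: field_simps)
qed

lemma large_A_lower_bound:
  fixes r \<epsilon> A :: real
  assumes r: "1 \<le> r" and \<epsilon>: "0 < \<epsilon>" "\<epsilon> \<le> 1" and A: "(8 / \<epsilon> + 3) powr r \<le> A"
  shows "(1 - \<epsilon>) powr r < (1 - \<epsilon> / 2) powr (r - 1) * (1 - (1 + (\<epsilon> / 2) powr (1 - r)) / (A - 1))"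
proof -
  have "(1 - \<epsilon>) powr r = (1 - \<epsilon>) powr (r - 1) * (1 - \<epsilon>)"
    using \<epsilon> by (simp add: powr_add[of _ "r - 1" 1, simplified])
  also have "\<dots> \<le> (1 - \<epsilon> / 2) powr (r - 1) * (1 - \<epsilon>)"
    using r \<epsilon> by (intro mult_right_mono powr_mono2) auto
  also have "\<dots> < (1 - \<epsilon> / 2) powr (r - 1) * (1 - (1 + (\<epsilon> / 2) powr (1 - r)) / (A - 1))"
    using large_A_bound(2)[OF assms] \<epsilon> by (intro mult_strict_left_mono) auto
  finally show ?thesis .
qed

lemma mult_le_of_powers_less:
  fixes a x y :: nat
  assumes "2 \<le> a" and "x \<in> {a ^ j | j. True}" and "y \<in> {a ^ j | j. True}" and "x < y"
  shows "a * x \<le> y"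
proof -
  obtain i j where "x = a ^ i" "y = a ^ j" using assms(2,3) by blast
  moreover have "i < j" using assms(1,4) calculation by simp
  ultimately show ?thesis using assms(1) by (metis power_Suc power_increasing Suc_leI le_trans one_le_numeral)
qed

lemma interleaved_powers:
  fixes a d :: nat and m n :: "nat \<Rightarrow> nat"
  assumes a: "2 \<le> a"
    and m_pow: "\<forall>s\<in>{1..d}. m s \<in> {a ^ j | j. True}"
    and n_pow: "\<forall>s\<in>{1..d}. n s \<in> {a ^ j | j. True}"
    and mn: "\<forall>s\<in>{1..d}. m s < n s" and nm: "\<forall>s\<in>{1..<d}. n s < m (s + 1)"
  shows "separated_sequences a m n d"
    and "\<And>s. s < d \<Longrightarrow> seq0 m s < m (Suc s)"
    and "\<And>s. s < d \<Longrightarrow> seq0 n s < n (Suc s)"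
proof -
  have m_pos: "0 < m (Suc s)" if "s < d" for s
  proof -
    have "m (Suc s) \<in> {a ^ j | j. True}" using m_pow that by simp
    then show ?thesis using a by auto
  qed
  show "separated_sequences a m n d"
  proof
    show "1 < real a" using a by simp
    show "real a * seq0 n s \<le> m (Suc s)" if "s < d" for s
    proof (cases s)
      case (Suc s')
      then have "a * n s \<le> m (Suc s)"
        using mult_le_of_powers_less[OF a] m_pow n_pow nm that by auto
      then show ?thesis using Suc by (simp flip: of_nat_mult)
    qed simp
    show "real a * m (Suc s) \<le> n (Suc s)" if "s < d" for s
    proof -
      have "a * m (Suc s) \<le> n (Suc s)"
        using mult_le_of_powers_less[OF a] m_pow n_pow mn that by auto
      then show ?thesis by (simp flip: of_nat_mult)
    qed
  qed
  show "seq0 m s < m (Suc s)" if "s < d" for s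
  proof (cases s)
    case (Suc s')
    then have "m s < n s" "n s < m (Suc s)" using mn nm that by auto
    then show ?thesis using Suc by simp
  qed (use m_pos that in simp)
  show "seq0 n s < n (Suc s)" if "s < d" for s
  proof -
    have "seq0 n s \<le> m (Suc s)"
      using nm that by (cases s) (auto simp: less_imp_le)
    moreover have "m (Suc s) < n (Suc s)" using mn that by auto
    ultimately show ?thesis by simp
  qed
qed

theorem lemma4p1:
  fixes r \<epsilon> :: real and d k :: nat and m n :: "nat \<Rightarrow> nat"
    and F :: "(nat \<Rightarrow> real) \<Rightarrow> (nat \<Rightarrow> real)"
  assumes "1 \<le> r" and "\<epsilon> > 0" and "d \<ge> 1"
    and "\<forall>s \<in> {1..d}. m s \<in> {(nat \<lceil>(8 / \<epsilon> + 3) powr r\<rceil>) ^ j | j. True}"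
    and "\<forall>s \<in> {1..d}. n s \<in> {(nat \<lceil>(8 / \<epsilon> + 3) powr r\<rceil>) ^ j | j. True}"
    and "\<forall>s \<in> {1..d}. m s < n s"
    and "\<forall>s \<in> {1..<d}. n s < m (s + 1)"
    and "k > n d"
    and "\<forall>x \<in> S_inf k. F x \<in> S_lp r k"
    and "support_preserving k F"
    and "step_preserving k F"
  shows "lp_norm r k (\<lambda>i. F (z d m) i - F (z d n) i) > 1 - \<epsilon>"
proof (cases "\<epsilon> \<le> 1")
  case False
  have "0 \<le> lp_norm r k (\<lambda>i. F (z d m) i - F (z d n) i)" by (simp add: lp_norm_def)
  with False show ?thesis by linarith
next
  case True
  define a where "a = nat \<lceil>(8 / \<epsilon> + 3) powr r\<rceil>"
  have a: "(8 / \<epsilon> + 3) powr r \<le> real a" unfolding a_def by linarith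
  then have "1 < a" using large_A_bound(1)[OF assms(1,2) True a] by simp
  then have "2 \<le> a" by linarith
  note powers = interleaved_powers[OF this assms(4-7)[folded a_def]]
  have "m d < n d" using assms(3,6) by simp
  then have d: "0 < d" "seq0 n d < k" "seq0 m d < k"
    using assms(3,8) by (auto simp: seq0_def)
  note u = F_z_step_vector[OF _ d(1) powers(2) d(3) assms(9-11)]
  note v = F_z_step_vector[OF _ d(1) powers(3) d(2) assms(9-11)]
  have "(1 - \<epsilon> / 2) powr (r - 1) * (1 - (1 + (\<epsilon> / 2) powr (1 - r)) / (real a - 1))
      \<le> (\<Sum>i=1..k. \<bar>F (z d m) i - F (z d n) i\<bar> powr r)"
    by (rule separated_sequences.sum_powr_diff_lower_bound[OF powers(1) assms(1)])
      (use u v assms(1,2) True d(2) in auto)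
  with large_A_lower_bound[OF assms(1,2) True a]
  have "(1 - \<epsilon>) powr r < (\<Sum>i=1..k. \<bar>F (z d m) i - F (z d n) i\<bar> powr r)"
    by (rule less_le_trans)
  then show ?thesis
    using assms(1) True by (intro lp_norm_gt) auto
qed

end
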